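(* For each $k\le n$, the optimal value of $$\mathcal U^\star_k=\min_{x\in\mathbb R^n,\,y\in\mathbb R^k}\ \langle c,x\rangle+\sum_{i=1}^k\lambda_iy_i^2+\eta^{-1}\|x\|_2^2+\theta\|x\|_0\ \text{ s.t. } Ax\le b,\ \sqrt{\lambda_i}y_i=\sqrt{\lambda_i}\langle v_i,x\rangle,\ i=1,\dots,k$$ satisfies $\mathcal U^\star_k=\min_{z\in\{0,1\}^n}\max_{\alpha\in\mathbb R^k,\beta\in\mathbb R^m_+}H(z,\alpha,\beta)$, where $$H(z,\alpha,\beta)=\theta\sum_{j=1}^nz_j-\beta^\top b-\tfrac14\|\alpha\|_2^2-\tfrac{\eta}{4}(c+V\sqrt\Lambda\alpha+A^\top\beta)^\top\mathrm{diag}(z)(c+V\sqrt\Lambda\alpha+A^\top\beta).$$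
   Context: Let $Q\in\mathbb R^{n\times n}$ be symmetric positive semidefinite with eigendecomposition $Q=\sum_{i=1}^n\lambda_i v_iv_i^\top$, $\lambda_1\ge\cdots\ge\lambda_n\ge0$, $\{v_i\}$ orthonormal. Let $c\in\mathbb R^n$, $A\in\mathbb R^{m\times n}$, $b\in\mathbb R^m$, $\eta>0$, $\theta>0$, $k\le n$, $V=[v_1,\dots,v_k]$, $\Lambda=\mathrm{diag}(\lambda_1,\dots,\lambda_k)$. $\|x\|_0$ is the number of nonzero entries of $x$; infeasible problems have value $+\infty$. *)

theory Defs
  imports "HOL-Analysis.Analysis" "HOL-Library.Extended_Real"
begin

text \<open>Vectors in R^n are represented as functions nat => real, only indices < n matter.
  Matrices are nat => nat => real. The eigenvectors are v i (i < n), with component v i j.\<close>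

definition l0norm :: "nat \<Rightarrow> (nat \<Rightarrow> real) \<Rightarrow> nat" where
  "l0norm n x = card {j. j < n \<and> x j \<noteq> 0}"

definition feasibleU :: "nat \<Rightarrow> nat \<Rightarrow> nat \<Rightarrow> (nat \<Rightarrow> real) \<Rightarrow> (nat \<Rightarrow> nat \<Rightarrow> real)
    \<Rightarrow> (nat \<Rightarrow> nat \<Rightarrow> real) \<Rightarrow> (nat \<Rightarrow> real) \<Rightarrow> (nat \<Rightarrow> real) \<Rightarrow> (nat \<Rightarrow> real) \<Rightarrow> bool" where
  "feasibleU n m k lam v A b x y \<longleftrightarrow>
     (\<forall>r<m. (\<Sum>j<n. A r j * x j) \<le> b r) \<and>
     (\<forall>i<k. sqrt (lam i) * y i = sqrt (lam i) * (\<Sum>j<n. v i j * x j))"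

definition objU :: "nat \<Rightarrow> nat \<Rightarrow> (nat \<Rightarrow> real) \<Rightarrow> (nat \<Rightarrow> real) \<Rightarrow> real \<Rightarrow> real
    \<Rightarrow> (nat \<Rightarrow> real) \<Rightarrow> (nat \<Rightarrow> real) \<Rightarrow> real" where
  "objU n k lam c \<eta> \<theta> x y =
     (\<Sum>j<n. c j * x j) + (\<Sum>i<k. lam i * (y i)\<^sup>2) + (1 / \<eta>) * (\<Sum>j<n. (x j)\<^sup>2)
     + \<theta> * real (l0norm n x)"

text \<open>Optimal value (infimum, +\<infinity> if infeasible) of the problem U*_k.\<close>
definition Ustar :: "nat \<Rightarrow> nat \<Rightarrow> nat \<Rightarrow> (nat \<Rightarrow> real) \<Rightarrow> (nat \<Rightarrow> nat \<Rightarrow> real) \<Rightarrow> (nat \<Rightarrow> real)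
    \<Rightarrow> (nat \<Rightarrow> nat \<Rightarrow> real) \<Rightarrow> (nat \<Rightarrow> real) \<Rightarrow> real \<Rightarrow> real \<Rightarrow> ereal" where
  "Ustar n m k lam v c A b \<eta> \<theta> =
     (INF xy \<in> {(x, y). feasibleU n m k lam v A b x y}.
        ereal (objU n k lam c \<eta> \<theta> (fst xy) (snd xy)))"

definition Hfun :: "nat \<Rightarrow> nat \<Rightarrow> nat \<Rightarrow> (nat \<Rightarrow> real) \<Rightarrow> (nat \<Rightarrow> nat \<Rightarrow> real) \<Rightarrow> (nat \<Rightarrow> real)
    \<Rightarrow> (nat \<Rightarrow> nat \<Rightarrow> real) \<Rightarrow> (nat \<Rightarrow> real) \<Rightarrow> real \<Rightarrow> real
    \<Rightarrow> (nat \<Rightarrow> real) \<Rightarrow> (nat \<Rightarrow> real) \<Rightarrow> (nat \<Rightarrow> real) \<Rightarrow> real" where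
  "Hfun n m k lam v c A b \<eta> \<theta> z \<alpha> \<beta> =
     (let w = (\<lambda>j. c j + (\<Sum>i<k. v i j * sqrt (lam i) * \<alpha> i) + (\<Sum>r<m. A r j * \<beta> r))
      in \<theta> * (\<Sum>j<n. z j) - (\<Sum>r<m. \<beta> r * b r) - (1/4) * (\<Sum>i<k. (\<alpha> i)\<^sup>2)
         - (\<eta> / 4) * (\<Sum>j<n. z j * (w j)\<^sup>2))"

end

theory Submission
  imports Defs
begin

text \<open>For a fixed support pattern z the problem is a strongly convex quadratic programme, and the
  inner maximum of H is its Lagrangian dual; so the theorem is weak duality plus strong duality for
  each z. Weak duality is an identity: the Lagrangian equals the dual function plus a sum of squares.
  Strong duality is obtained without any constraint qualification by a quadratic penalty: a large
  penalty parameter t keeps the penalised minimum above any level M below the constrained optimum,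
  the penalised problem has a minimiser x, and its first-order conditions make
  alpha_i = 2 sqrt(lambda_i) <v_i, x> and beta_r = 2 t max(0, (Ax - b)_r) a dual point at which all
  squares vanish.\<close>

lemma continuous_on_coordinate [continuous_intros]:
  "continuous_on S (\<lambda>x :: nat \<Rightarrow> real. x j)"
  by (rule continuous_on_subset[OF continuous_on_product_coordinates]) simp

lemma compact_PiE_UNIV:
  "(\<And>j. compact (T j)) \<Longrightarrow> compact (PiE UNIV (T :: nat \<Rightarrow> real set))"
  using compactin_PiE[of "\<lambda>_. euclidean" UNIV T] by (simp add: euclidean_product_topology)

lemma sum_lessThan_fun_upd:
  fixes f :: "nat \<Rightarrow> 'b \<Rightarrow> 'a :: ab_group_add"
  assumes "j < n"
  shows "(\<Sum>l<n. f l ((x(j := u)) l)) = (\<Sum>l<n. f l (x l)) + (f j u - f j (x j))"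
proof -
  have split: "(\<Sum>l<n. g l) = g j + (\<Sum>l\<in>{..<n} - {j}. g l)" for g :: "nat \<Rightarrow> 'a"
    using assms by (simp add: sum.remove)
  have "(\<Sum>l\<in>{..<n} - {j}. f l ((x(j := u)) l)) = (\<Sum>l\<in>{..<n} - {j}. f l (x l))"
    by (rule sum.cong) auto
  then show ?thesis using split[of "\<lambda>l. f l ((x(j := u)) l)"] split[of "\<lambda>l. f l (x l)"] by simp
qed

lemma sum_indicator_eq_card:
  "(\<Sum>j<(n::nat). if P j then 1 else (0::real)) = real (card {j. j < n \<and> P j})"
  by (simp add: sum.If_cases Collect_conj_eq lessThan_def Int_commute)

lemma pos_part_sq_add_le:
  fixes u h :: real
  shows "(max 0 (u + h))\<^sup>2 \<le> (max 0 u)\<^sup>2 + 2 * max 0 u * h + h\<^sup>2"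
proof (cases "u + h \<le> 0")
  case True
  then show ?thesis
    using zero_le_power2[of "max 0 u + h"] by (simp add: power2_eq_square algebra_simps)
next
  case False
  show ?thesis
  proof (cases "u \<ge> 0")
    case True
    then show ?thesis using False by (simp add: power2_eq_square algebra_simps)
  next
    case u_neg: False
    have "(u + h)\<^sup>2 - h\<^sup>2 = u * (u + 2 * h)" by (simp add: power2_eq_square algebra_simps)
    moreover have "u * (u + 2 * h) \<le> 0" using u_neg False by (intro mult_nonpos_nonneg) auto
    ultimately show ?thesis using False u_neg by simp
  qed
qed

lemma affine_plus_quadratic_nonneg_imp_zero:
  fixes g C :: real
  assumes "C \<ge> 0" and nonneg: "\<And>s. 0 \<le> s * g + s\<^sup>2 * C"
  shows "g = 0"
proof (rule ccontr)
  assume "g \<noteq> 0"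
  define D where "D = C + 1"
  have "D > 0" using \<open>C \<ge> 0\<close> unfolding D_def by simp
  define s where "s = - g / (2 * D)"
  have "s * g + s\<^sup>2 * C \<le> s * g + s\<^sup>2 * D"
    unfolding D_def by (simp add: mult_left_mono)
  also have "\<dots> = - (g\<^sup>2 / (4 * D))"
    using \<open>D > 0\<close> unfolding s_def by (simp add: field_simps power2_eq_square)
  also have "\<dots> < 0" using \<open>g \<noteq> 0\<close> \<open>D > 0\<close> by (simp add: divide_neg_pos)
  finally show False using nonneg[of s] by simp
qed

locale sparse_qp =
  fixes n m k :: nat and lam :: "nat \<Rightarrow> real" and v :: "nat \<Rightarrow> nat \<Rightarrow> real"
    and c b :: "nat \<Rightarrow> real" and A :: "nat \<Rightarrow> nat \<Rightarrow> real" and \<eta> :: real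
  assumes lam_nonneg: "\<And>i. i < k \<Longrightarrow> lam i \<ge> 0" and eta_pos: "\<eta> > 0"
begin

definition proj :: "nat \<Rightarrow> (nat \<Rightarrow> real) \<Rightarrow> real" where
  "proj i x = (\<Sum>j<n. v i j * x j)"

definition Ax :: "nat \<Rightarrow> (nat \<Rightarrow> real) \<Rightarrow> real" where
  "Ax r x = (\<Sum>j<n. A r j * x j)"

definition smooth_obj :: "(nat \<Rightarrow> real) \<Rightarrow> real" where
  "smooth_obj x = (\<Sum>j<n. c j * x j) + (\<Sum>i<k. lam i * (proj i x)\<^sup>2) + (1 / \<eta>) * (\<Sum>j<n. (x j)\<^sup>2)"

definition violation :: "(nat \<Rightarrow> real) \<Rightarrow> real" where
  "violation x = (\<Sum>r<m. (max 0 (Ax r x - b r))\<^sup>2)"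

definition penalized :: "real \<Rightarrow> (nat \<Rightarrow> real) \<Rightarrow> real" where
  "penalized t x = smooth_obj x + t * violation x"

definition supported :: "(nat \<Rightarrow> real) \<Rightarrow> (nat \<Rightarrow> real) \<Rightarrow> bool" where
  "supported z x \<longleftrightarrow> (\<forall>l. x l \<noteq> 0 \<longrightarrow> l < n \<and> z l = 1)"

definition shifted_cost :: "(nat \<Rightarrow> real) \<Rightarrow> (nat \<Rightarrow> real) \<Rightarrow> nat \<Rightarrow> real" where
  "shifted_cost \<alpha> \<beta> j = c j + (\<Sum>i<k. v i j * sqrt (lam i) * \<alpha> i) + (\<Sum>r<m. A r j * \<beta> r)"

definition dual :: "(nat \<Rightarrow> real) \<Rightarrow> (nat \<Rightarrow> real) \<Rightarrow> (nat \<Rightarrow> real) \<Rightarrow> real" where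
  "dual z \<alpha> \<beta> = - (\<Sum>r<m. \<beta> r * b r) - (1/4) * (\<Sum>i<k. (\<alpha> i)\<^sup>2)
     - (\<eta>/4) * (\<Sum>j<n. z j * (shifted_cost \<alpha> \<beta> j)\<^sup>2)"

definition mult_alpha :: "(nat \<Rightarrow> real) \<Rightarrow> nat \<Rightarrow> real" where
  "mult_alpha x i = 2 * sqrt (lam i) * proj i x"

definition mult_beta :: "real \<Rightarrow> (nat \<Rightarrow> real) \<Rightarrow> nat \<Rightarrow> real" where
  "mult_beta t x r = 2 * t * max 0 (Ax r x - b r)"

lemma sqrt_lam_sq: "i < k \<Longrightarrow> sqrt (lam i) * sqrt (lam i) = lam i"
  using lam_nonneg by simp

lemma violation_nonneg: "violation x \<ge> 0"
  unfolding violation_def by (intro sum_nonneg) auto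

lemma smooth_obj_le_penalized: "t \<ge> 0 \<Longrightarrow> smooth_obj x \<le> penalized t x"
  unfolding penalized_def using violation_nonneg[of x] by simp

lemma penalized_mono: "t \<le> t' \<Longrightarrow> penalized t x \<le> penalized t' x"
  unfolding penalized_def using violation_nonneg[of x] by (simp add: mult_right_mono)

lemma continuous_on_penalized: "continuous_on S (penalized t)"
  unfolding penalized_def smooth_obj_def violation_def proj_def Ax_def
  by (intro continuous_intros)

subsection \<open>Weak duality\<close>

lemma lagrangian_eq_dual_plus_squares:
  assumes z01: "\<forall>j<n. z j \<in> {0, 1}" and x_zero: "\<forall>j<n. z j = 0 \<longrightarrow> x j = 0"
  shows "smooth_obj x + (\<Sum>r<m. \<beta> r * (Ax r x - b r)) = dual z \<alpha> \<beta>
    + (\<Sum>i<k. (sqrt (lam i) * proj i x - \<alpha> i / 2)\<^sup>2)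
    + (1/\<eta>) * (\<Sum>j<n. z j * (x j + \<eta>/2 * shifted_cost \<alpha> \<beta> j)\<^sup>2)"
proof -
  let ?w = "shifted_cost \<alpha> \<beta>"
  have swap_alpha: "(\<Sum>j<n. x j * (\<Sum>i<k. v i j * sqrt (lam i) * \<alpha> i))
      = (\<Sum>i<k. sqrt (lam i) * \<alpha> i * proj i x)"
    unfolding proj_def sum_distrib_left by (subst sum.swap) (simp add: ac_simps)
  have swap_beta: "(\<Sum>j<n. x j * (\<Sum>r<m. A r j * \<beta> r)) = (\<Sum>r<m. \<beta> r * Ax r x)"
    unfolding Ax_def sum_distrib_left by (subst sum.swap) (simp add: ac_simps)
  have pairing: "(\<Sum>j<n. x j * ?w j) = (\<Sum>j<n. c j * x j)
      + (\<Sum>i<k. sqrt (lam i) * \<alpha> i * proj i x) + (\<Sum>r<m. \<beta> r * Ax r x)"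
    unfolding shifted_cost_def distrib_left sum.distrib swap_alpha swap_beta by (simp add: ac_simps)
  have per_i: "(sqrt (lam i) * proj i x - \<alpha> i / 2)\<^sup>2
      = lam i * (proj i x)\<^sup>2 - sqrt (lam i) * \<alpha> i * proj i x + (1/4) * (\<alpha> i)\<^sup>2" if "i < k" for i
    using lam_nonneg[OF that] by (simp add: power2_diff power_mult_distrib power_divide)
  have per_j: "(1/\<eta>) * (z j * (x j + \<eta>/2 * ?w j)\<^sup>2)
      = (1/\<eta>) * (x j)\<^sup>2 + x j * ?w j + (\<eta>/4) * (z j * (?w j)\<^sup>2)" if "j \<in> {..<n}" for j
    using z01 x_zero that eta_pos by (auto simp: power2_eq_square field_simps)
  have alpha_sum: "(\<Sum>i<k. (sqrt (lam i) * proj i x - \<alpha> i / 2)\<^sup>2) = (\<Sum>i<k. lam i * (proj i x)\<^sup>2)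
      - (\<Sum>i<k. sqrt (lam i) * \<alpha> i * proj i x) + (1/4) * (\<Sum>i<k. (\<alpha> i)\<^sup>2)"
    by (simp add: per_i sum.distrib sum_subtractf sum_distrib_left)
  have "(1/\<eta>) * (\<Sum>j<n. z j * (x j + \<eta>/2 * ?w j)\<^sup>2)
      = (\<Sum>j<n. (1/\<eta>) * (z j * (x j + \<eta>/2 * ?w j)\<^sup>2))"
    by (simp only: sum_distrib_left)
  also have "\<dots> = (\<Sum>j<n. (1/\<eta>) * (x j)\<^sup>2 + x j * ?w j + (\<eta>/4) * (z j * (?w j)\<^sup>2))"
    by (rule sum.cong[OF refl per_j])
  also have "\<dots> = (1/\<eta>) * (\<Sum>j<n. (x j)\<^sup>2) + (\<Sum>j<n. x j * ?w j)
      + (\<eta>/4) * (\<Sum>j<n. z j * (?w j)\<^sup>2)"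
    by (simp only: sum.distrib sum_distrib_left)
  finally have z_sum: "(1/\<eta>) * (\<Sum>j<n. z j * (x j + \<eta>/2 * ?w j)\<^sup>2) = (1/\<eta>) * (\<Sum>j<n. (x j)\<^sup>2)
      + (\<Sum>j<n. x j * ?w j) + (\<eta>/4) * (\<Sum>j<n. z j * (?w j)\<^sup>2)" .
  have beta_sum: "(\<Sum>r<m. \<beta> r * (Ax r x - b r)) = (\<Sum>r<m. \<beta> r * Ax r x) - (\<Sum>r<m. \<beta> r * b r)"
    by (simp add: algebra_simps sum_subtractf)
  show ?thesis
    unfolding smooth_obj_def dual_def using pairing alpha_sum z_sum beta_sum by linarith
qed

lemma weak_duality:
  assumes "\<forall>j<n. z j \<in> {0, 1}" and "\<forall>j<n. z j = 0 \<longrightarrow> x j = 0"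
    and feasible: "\<forall>r<m. Ax r x \<le> b r" and \<beta>_nonneg: "\<forall>r<m. \<beta> r \<ge> 0"
  shows "dual z \<alpha> \<beta> \<le> smooth_obj x"
proof -
  have "0 \<le> (1/\<eta>) * (\<Sum>j<n. z j * (x j + \<eta>/2 * shifted_cost \<alpha> \<beta> j)\<^sup>2)"
    using assms(1) eta_pos by (intro mult_nonneg_nonneg sum_nonneg) auto
  moreover have "(\<Sum>r<m. \<beta> r * (Ax r x - b r)) \<le> 0"
    using feasible \<beta>_nonneg by (intro sum_nonpos) (auto intro: mult_nonneg_nonpos)
  moreover have "0 \<le> (\<Sum>i<k. (sqrt (lam i) * proj i x - \<alpha> i / 2)\<^sup>2)"
    by (intro sum_nonneg) simp
  ultimately show ?thesis
    using lagrangian_eq_dual_plus_squares[OF assms(1,2), of \<beta> \<alpha>] by linarith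
qed

subsection \<open>Existence of penalised minimisers\<close>

lemma smooth_obj_lower_bound:
  "(1/(2*\<eta>)) * (\<Sum>j<n. (x j)\<^sup>2) - (\<eta>/2) * (\<Sum>j<n. (c j)\<^sup>2) \<le> smooth_obj x"
proof -
  have coordinate: "(1/(2*\<eta>)) * (x j)\<^sup>2 - (\<eta>/2) * (c j)\<^sup>2 \<le> c j * x j + (1/\<eta>) * (x j)\<^sup>2" for j
  proof -
    have "0 \<le> (1/(2*\<eta>)) * (x j + \<eta> * c j)\<^sup>2" using eta_pos by simp
    also have "\<dots> = c j * x j + (1/\<eta>) * (x j)\<^sup>2 - ((1/(2*\<eta>)) * (x j)\<^sup>2 - (\<eta>/2) * (c j)\<^sup>2)"
      using eta_pos by (simp add: power2_eq_square field_simps)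
    finally show ?thesis by simp
  qed
  have "0 \<le> (\<Sum>i<k. lam i * (proj i x)\<^sup>2)"
    using lam_nonneg by (auto intro!: sum_nonneg)
  moreover have "(\<Sum>j<n. (1/(2*\<eta>)) * (x j)\<^sup>2 - (\<eta>/2) * (c j)\<^sup>2) \<le> (\<Sum>j<n. c j * x j + (1/\<eta>) * (x j)\<^sup>2)"
    by (intro sum_mono coordinate)
  ultimately show ?thesis
    unfolding smooth_obj_def by (simp add: sum_subtractf sum.distrib sum_distrib_left)
qed

definition level_radius :: "real \<Rightarrow> real" where
  "level_radius K = sqrt (2 * \<eta> * K + \<eta>\<^sup>2 * (\<Sum>j<n. (c j)\<^sup>2))"

definition support_box :: "(nat \<Rightarrow> real) \<Rightarrow> real \<Rightarrow> (nat \<Rightarrow> real) set" where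
  "support_box z K = PiE UNIV (\<lambda>j. if j < n \<and> z j = 1 then {- level_radius K..level_radius K} else {0})"

lemma supported_if_in_support_box: "x \<in> support_box z K \<Longrightarrow> supported z x"
  unfolding support_box_def supported_def by (auto simp: PiE_UNIV_domain split: if_splits)

lemma compact_support_box: "compact (support_box z K)"
  unfolding support_box_def by (rule compact_PiE_UNIV) auto

lemma in_support_box_if_level:
  assumes "supported z x" and "smooth_obj x \<le> K"
  shows "x \<in> support_box z K"
proof -
  have "(1/(2*\<eta>)) * (\<Sum>j<n. (x j)\<^sup>2) \<le> K + (\<eta>/2) * (\<Sum>j<n. (c j)\<^sup>2)"
    using smooth_obj_lower_bound[of x] assms(2) by simp
  then have sq_sum: "(\<Sum>j<n. (x j)\<^sup>2) \<le> 2 * \<eta> * K + \<eta>\<^sup>2 * (\<Sum>j<n. (c j)\<^sup>2)"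
    using eta_pos by (simp add: field_simps power2_eq_square)
  have bound: "\<bar>x j\<bar> \<le> level_radius K" if "j < n" for j
  proof -
    have "(x j)\<^sup>2 \<le> (\<Sum>j<n. (x j)\<^sup>2)" by (rule member_le_sum) (use that in auto)
    then have "sqrt ((x j)\<^sup>2) \<le> level_radius K"
      unfolding level_radius_def using sq_sum by (intro real_sqrt_le_mono) linarith
    then show ?thesis by simp
  qed
  have "x j \<in> (if j < n \<and> z j = 1 then {- level_radius K..level_radius K} else {0})" for j
  proof (cases "j < n \<and> z j = 1")
    case True
    then show ?thesis using bound[of j] by (simp add: abs_le_iff)
  next
    case False
    then show ?thesis using assms(1) unfolding supported_def by auto
  qed
  then show ?thesis unfolding support_box_def by (simp add: PiE_UNIV_domain)
qed

lemma penalized_has_minimizer: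
  assumes "t \<ge> 0"
  obtains x where "supported z x" and "\<And>y. supported z y \<Longrightarrow> penalized t x \<le> penalized t y"
proof -
  let ?B = "support_box z (penalized t (\<lambda>_. 0))"
  have zero_in: "(\<lambda>_. 0) \<in> ?B"
    by (rule in_support_box_if_level) (auto simp: supported_def smooth_obj_le_penalized assms)
  then obtain x where x: "x \<in> ?B" "\<forall>y\<in>?B. penalized t x \<le> penalized t y"
    using continuous_attains_inf[OF compact_support_box _ continuous_on_penalized] by blast
  have "penalized t x \<le> penalized t y" if "supported z y" for y
  proof (cases "penalized t y \<le> penalized t (\<lambda>_. 0)")
    case True
    then have "y \<in> ?B"
      using in_support_box_if_level[OF that] smooth_obj_le_penalized[OF assms, of y] by simp
    then show ?thesis using x by blast
  next
    case False
    moreover have "penalized t x \<le> penalized t (\<lambda>_. 0)" using x zero_in by blast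
    ultimately show ?thesis by linarith
  qed
  then show ?thesis using that x supported_if_in_support_box by blast
qed

subsection \<open>First-order conditions\<close>

lemma shifted_cost_mult:
  "shifted_cost (mult_alpha x) (mult_beta t x) j
    = c j + 2 * (\<Sum>i<k. lam i * proj i x * v i j) + t * (\<Sum>r<m. 2 * max 0 (Ax r x - b r) * A r j)"
proof -
  have "v i j * sqrt (lam i) * mult_alpha x i = 2 * (lam i * proj i x * v i j)" if "i \<in> {..<k}" for i
  proof -
    have "v i j * sqrt (lam i) * mult_alpha x i = 2 * (sqrt (lam i) * sqrt (lam i) * proj i x * v i j)"
      by (simp add: mult_alpha_def ac_simps)
    then show ?thesis using sqrt_lam_sq that by simp
  qed
  then have "(\<Sum>i<k. v i j * sqrt (lam i) * mult_alpha x i) = (\<Sum>i<k. 2 * (lam i * proj i x * v i j))"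
    by (rule sum.cong[OF refl])
  then show ?thesis
    unfolding shifted_cost_def mult_beta_def by (simp add: sum_distrib_left algebra_simps)
qed

lemma penalized_coordinate_step:
  assumes "t \<ge> 0" and "j < n"
  shows "penalized t (x(j := x j + s)) \<le> penalized t x
    + s * (shifted_cost (mult_alpha x) (mult_beta t x) j + (2/\<eta>) * x j)
    + s\<^sup>2 * ((\<Sum>i<k. lam i * (v i j)\<^sup>2) + 1/\<eta> + t * (\<Sum>r<m. (A r j)\<^sup>2))"
proof -
  let ?y = "x(j := x j + s)"
  have proj_y: "proj i ?y = proj i x + s * v i j" for i
    unfolding proj_def using sum_lessThan_fun_upd[OF assms(2), of "\<lambda>l u. v i l * u" x "x j + s"]
    by (simp add: algebra_simps)
  have Ax_y: "Ax r ?y = Ax r x + s * A r j" for r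
    unfolding Ax_def using sum_lessThan_fun_upd[OF assms(2), of "\<lambda>l u. A r l * u" x "x j + s"]
    by (simp add: algebra_simps)
  have smooth_y: "smooth_obj ?y = smooth_obj x
      + s * (c j + 2 * (\<Sum>i<k. lam i * proj i x * v i j) + (2/\<eta>) * x j)
      + s\<^sup>2 * ((\<Sum>i<k. lam i * (v i j)\<^sup>2) + 1/\<eta>)"
    unfolding smooth_obj_def proj_y
    using sum_lessThan_fun_upd[OF assms(2), of "\<lambda>l u. c l * u" x "x j + s"]
      sum_lessThan_fun_upd[OF assms(2), of "\<lambda>l u. u\<^sup>2" x "x j + s"]
    by (simp add: power2_eq_square algebra_simps sum.distrib sum_distrib_left)
  have "violation ?y \<le> (\<Sum>r<m. (max 0 (Ax r x - b r))\<^sup>2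
      + 2 * max 0 (Ax r x - b r) * (s * A r j) + (s * A r j)\<^sup>2)"
    unfolding violation_def Ax_y
  proof (intro sum_mono)
    fix r
    show "(max 0 (Ax r x + s * A r j - b r))\<^sup>2 \<le> (max 0 (Ax r x - b r))\<^sup>2
        + 2 * max 0 (Ax r x - b r) * (s * A r j) + (s * A r j)\<^sup>2"
      using pos_part_sq_add_le[of "Ax r x - b r" "s * A r j"] by (simp add: algebra_simps)
  qed
  also have "\<dots> = violation x + s * (\<Sum>r<m. 2 * max 0 (Ax r x - b r) * A r j)
      + s\<^sup>2 * (\<Sum>r<m. (A r j)\<^sup>2)"
    unfolding violation_def by (simp add: sum.distrib sum_distrib_left algebra_simps power_mult_distrib)
  finally have "t * violation ?y \<le> t * (violation x + s * (\<Sum>r<m. 2 * max 0 (Ax r x - b r) * A r j)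
      + s\<^sup>2 * (\<Sum>r<m. (A r j)\<^sup>2))"
    using assms(1) by (rule mult_left_mono)
  then show ?thesis
    unfolding penalized_def smooth_y shifted_cost_mult by (simp add: algebra_simps)
qed

lemma penalized_stationary:
  assumes "t \<ge> 0" and x_supp: "supported z x"
    and x_min: "\<And>y. supported z y \<Longrightarrow> penalized t x \<le> penalized t y"
    and "j < n" "z j = 1"
  shows "shifted_cost (mult_alpha x) (mult_beta t x) j + (2/\<eta>) * x j = 0"
proof (rule affine_plus_quadratic_nonneg_imp_zero)
  show "0 \<le> (\<Sum>i<k. lam i * (v i j)\<^sup>2) + 1/\<eta> + t * (\<Sum>r<m. (A r j)\<^sup>2)"
    using lam_nonneg eta_pos \<open>t \<ge> 0\<close> by (auto intro!: add_nonneg_nonneg sum_nonneg mult_nonneg_nonneg)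
  fix s
  have "supported z (x(j := x j + s))" using x_supp assms(4,5) unfolding supported_def by auto
  then show "0 \<le> s * (shifted_cost (mult_alpha x) (mult_beta t x) j + (2/\<eta>) * x j)
      + s\<^sup>2 * ((\<Sum>i<k. lam i * (v i j)\<^sup>2) + 1/\<eta> + t * (\<Sum>r<m. (A r j)\<^sup>2))"
    using x_min penalized_coordinate_step[OF assms(1,4), of x s] by fastforce
qed

lemma penalized_le_dual_mult:
  assumes "t \<ge> 0" and z01: "\<forall>j<n. z j \<in> {0, 1}" and x_supp: "supported z x"
    and x_min: "\<And>y. supported z y \<Longrightarrow> penalized t x \<le> penalized t y"
  shows "penalized t x \<le> dual z (mult_alpha x) (mult_beta t x)"
proof -
  have x_zero: "\<forall>j<n. z j = 0 \<longrightarrow> x j = 0" using x_supp unfolding supported_def by auto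
  have stationary_terms: "(\<Sum>j<n. z j * (x j + \<eta>/2 * shifted_cost (mult_alpha x) (mult_beta t x) j)\<^sup>2) = 0"
  proof (intro sum.neutral ballI)
    fix j assume "j \<in> {..<n}"
    then have "z j = 0 \<or> z j = 1" and "j < n" using z01 by auto
    then show "z j * (x j + \<eta>/2 * shifted_cost (mult_alpha x) (mult_beta t x) j)\<^sup>2 = 0"
      using penalized_stationary[OF assms(1) x_supp x_min, of j] eta_pos
      by (auto simp: field_simps)
  qed
  have alpha_terms: "(\<Sum>i<k. (sqrt (lam i) * proj i x - mult_alpha x i / 2)\<^sup>2) = 0"
    by (simp add: mult_alpha_def)
  have "t * violation x \<le> (\<Sum>r<m. mult_beta t x r * (Ax r x - b r))"
    unfolding violation_def mult_beta_def sum_distrib_left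
    using \<open>t \<ge> 0\<close> by (intro sum_mono) (simp add: power2_eq_square max_def)
  then show ?thesis
    using lagrangian_eq_dual_plus_squares[OF z01 x_zero, of "mult_beta t x" "mult_alpha x"]
    unfolding penalized_def stationary_terms alpha_terms by linarith
qed

subsection \<open>Strong duality by a quadratic penalty\<close>

lemma feasible_if_penalized_bounded:
  assumes bounded: "\<And>t::nat. penalized (real t) x \<le> M"
  shows "\<forall>r<m. Ax r x \<le> b r" and "smooth_obj x \<le> M"
proof -
  have "violation x = 0"
  proof (rule ccontr)
    assume "violation x \<noteq> 0"
    then have pos: "violation x > 0" using violation_nonneg[of x] by simp
    obtain t :: nat where "(M - smooth_obj x) / violation x < real t" using reals_Archimedean2 by blast
    then have "M - smooth_obj x < real t * violation x" using pos by (simp add: field_simps)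
    then show False using bounded[of t] unfolding penalized_def by simp
  qed
  then have "\<forall>r\<in>{..<m}. (max 0 (Ax r x - b r))\<^sup>2 = 0"
    unfolding violation_def by (subst (asm) sum_nonneg_eq_0_iff) auto
  then show "\<forall>r<m. Ax r x \<le> b r"
  proof (intro allI impI)
    fix r assume "r < m" and "\<forall>r\<in>{..<m}. (max 0 (Ax r x - b r))\<^sup>2 = 0"
    then have "(max 0 (Ax r x - b r))\<^sup>2 = 0" by blast
    then show "Ax r x \<le> b r" by (cases "Ax r x \<le> b r") (simp_all add: max_def)
  qed
  show "smooth_obj x \<le> M" using bounded[of 0] unfolding penalized_def by simp
qed

lemma exists_penalty_above:
  assumes above: "\<And>x. supported z x \<Longrightarrow> \<forall>r<m. Ax r x \<le> b r \<Longrightarrow> M < smooth_obj x"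
  obtains t where "t \<ge> 0" and "\<And>x. supported z x \<Longrightarrow> M < penalized t x"
proof -
  have "\<exists>t\<ge>0. \<forall>x. supported z x \<longrightarrow> M < penalized t x"
  proof (rule ccontr)
    assume "\<not> ?thesis"
    then have below: "\<exists>x. supported z x \<and> penalized t x \<le> M" if "t \<ge> 0" for t
      using that by (meson not_le)
    let ?B = "support_box z M" and ?level = "\<lambda>t::nat. {x. penalized (real t) x \<le> M}"
    have "?B \<inter> (\<Inter>t. ?level t) \<noteq> {}"
    proof (rule compact_imp_fip_image[OF compact_support_box])
      show "closed (?level t)" for t
        by (rule closed_Collect_le) (auto intro: continuous_on_penalized)
    next
      fix J :: "nat set" assume "finite J" "J \<subseteq> UNIV"
      obtain x where x: "supported z x" "penalized (real (Max (insert 0 J))) x \<le> M"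
        using below[of "real (Max (insert 0 J))"] by auto
      have "x \<in> ?B"
        using in_support_box_if_level[OF x(1)] smooth_obj_le_penalized[of "real (Max (insert 0 J))" x] x(2)
        by simp
      moreover have "x \<in> ?level t" if "t \<in> J" for t
        using \<open>finite J\<close> that x(2) penalized_mono[of "real t" "real (Max (insert 0 J))" x] by simp
      ultimately show "?B \<inter> (\<Inter>t\<in>J. ?level t) \<noteq> {}" by blast
    qed
    then obtain x where x_in: "x \<in> ?B" and bounded: "\<And>t::nat. penalized (real t) x \<le> M" by blast
    have "M < smooth_obj x"
      using above[OF supported_if_in_support_box[OF x_in] feasible_if_penalized_bounded(1)[OF bounded]] .
    then show False using feasible_if_penalized_bounded(2)[OF bounded] by simp
  qed
  then show ?thesis using that by blast
qed

lemma strong_duality: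
  assumes z01: "\<forall>j<n. z j \<in> {0, 1}"
    and above: "\<And>x. supported z x \<Longrightarrow> \<forall>r<m. Ax r x \<le> b r \<Longrightarrow> M < smooth_obj x"
  obtains \<alpha> \<beta> where "\<forall>r<m. \<beta> r \<ge> 0" and "M < dual z \<alpha> \<beta>"
proof -
  obtain t where t: "t \<ge> 0" "\<And>x. supported z x \<Longrightarrow> M < penalized t x"
    using exists_penalty_above[OF above] by blast
  obtain x where x: "supported z x" "\<And>y. supported z y \<Longrightarrow> penalized t x \<le> penalized t y"
    using penalized_has_minimizer[OF t(1)] by blast
  have "M < dual z (mult_alpha x) (mult_beta t x)"
    using t(2)[OF x(1)] penalized_le_dual_mult[OF t(1) z01 x] by linarith
  moreover have "\<forall>r<m. mult_beta t x r \<ge> 0" using t(1) by (simp add: mult_beta_def)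
  ultimately show ?thesis using that by blast
qed

lemma feasibleU_iff:
  "feasibleU n m k lam v A b x y \<longleftrightarrow>
    (\<forall>r<m. Ax r x \<le> b r) \<and> (\<forall>i<k. sqrt (lam i) * y i = sqrt (lam i) * proj i x)"
  unfolding feasibleU_def Ax_def proj_def by simp

lemma objU_eq:
  assumes "\<forall>i<k. sqrt (lam i) * y i = sqrt (lam i) * proj i x"
  shows "objU n k lam c \<eta> \<theta> x y = smooth_obj x + \<theta> * real (l0norm n x)"
proof -
  have "lam i * (y i)\<^sup>2 = lam i * (proj i x)\<^sup>2" if "i < k" for i
  proof -
    have coupled: "sqrt (lam i) * y i = sqrt (lam i) * proj i x" using assms that by blast
    have "lam i * (y i)\<^sup>2 = (sqrt (lam i) * y i)\<^sup>2"
      using lam_nonneg[OF that] by (simp add: power_mult_distrib)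
    also have "\<dots> = lam i * (proj i x)\<^sup>2"
      unfolding coupled using lam_nonneg[OF that] by (simp add: power_mult_distrib)
    finally show ?thesis .
  qed
  then have "(\<Sum>i<k. lam i * (y i)\<^sup>2) = (\<Sum>i<k. lam i * (proj i x)\<^sup>2)"
    by (intro sum.cong) auto
  then show ?thesis unfolding objU_def smooth_obj_def by simp
qed

lemma Hfun_eq_dual: "Hfun n m k lam v c A b \<eta> \<theta> z \<alpha> \<beta> = \<theta> * (\<Sum>j<n. z j) + dual z \<alpha> \<beta>"
  unfolding Hfun_def dual_def shifted_cost_def Let_def by simp

lemma minimax_le_Ustar:
  "(INF z \<in> {z. \<forall>j<n. z j \<in> {0, 1}}. SUP \<alpha>\<beta> \<in> {(\<alpha>, \<beta>). \<forall>r<m. \<beta> r \<ge> 0}.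
      ereal (Hfun n m k lam v c A b \<eta> \<theta> z (fst \<alpha>\<beta>) (snd \<alpha>\<beta>)))
    \<le> Ustar n m k lam v c A b \<eta> \<theta>"
  unfolding Ustar_def
proof (intro INF_greatest, clarsimp)
  fix x y assume feasible: "feasibleU n m k lam v A b x y"
  define z where "z j = (if x j \<noteq> 0 then 1 else (0::real))" for j
  have "Hfun n m k lam v c A b \<eta> \<theta> z \<alpha> \<beta> \<le> objU n k lam c \<eta> \<theta> x y"
    if "\<forall>r<m. 0 \<le> \<beta> r" for \<alpha> \<beta>
  proof -
    have "dual z \<alpha> \<beta> \<le> smooth_obj x"
      using feasible that by (intro weak_duality) (auto simp: z_def feasibleU_iff)
    moreover have "(\<Sum>j<n. z j) = real (l0norm n x)"
      unfolding z_def l0norm_def by (rule sum_indicator_eq_card)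
    ultimately show ?thesis
      using feasible by (simp add: Hfun_eq_dual objU_eq feasibleU_iff)
  qed
  then show "(INF z \<in> {z. \<forall>j<n. z j = 0 \<or> z j = 1}. SUP \<alpha>\<beta> \<in> {(\<alpha>, \<beta>). \<forall>r<m. 0 \<le> \<beta> r}.
      ereal (Hfun n m k lam v c A b \<eta> \<theta> z (fst \<alpha>\<beta>) (snd \<alpha>\<beta>))) \<le> ereal (objU n k lam c \<eta> \<theta> x y)"
    by (intro INF_lower2[of z] SUP_least) (auto simp: z_def)
qed

lemma Ustar_le_maximin:
  assumes "\<theta> \<ge> 0" and z01: "\<forall>j<n. z j \<in> {0, 1}"
  shows "Ustar n m k lam v c A b \<eta> \<theta> \<le> (SUP \<alpha>\<beta> \<in> {(\<alpha>, \<beta>). \<forall>r<m. \<beta> r \<ge> 0}.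
      ereal (Hfun n m k lam v c A b \<eta> \<theta> z (fst \<alpha>\<beta>) (snd \<alpha>\<beta>)))"
proof (rule dense_le)
  fix U assume "U < Ustar n m k lam v c A b \<eta> \<theta>"
  then obtain M where M: "U < ereal M" "ereal M < Ustar n m k lam v c A b \<eta> \<theta>"
    using ereal_dense2 by blast
  have "M - \<theta> * (\<Sum>j<n. z j) < smooth_obj x"
    if "supported z x" and feasible: "\<forall>r<m. Ax r x \<le> b r" for x
  proof -
    have "Ustar n m k lam v c A b \<eta> \<theta> \<le> ereal (objU n k lam c \<eta> \<theta> x (\<lambda>i. proj i x))"
      unfolding Ustar_def
      by (rule INF_lower2[of "(x, \<lambda>i. proj i x)"]) (use feasible in \<open>auto simp: feasibleU_iff\<close>)
    then have "ereal M < ereal (objU n k lam c \<eta> \<theta> x (\<lambda>i. proj i x))"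
      using M(2) by (simp only: order_less_le_trans)
    moreover have "\<theta> * real (l0norm n x) \<le> \<theta> * (\<Sum>j<n. z j)"
    proof -
      have "(\<Sum>j<n. z j) = (\<Sum>j<n. if z j = 1 then 1 else 0)" using z01 by (intro sum.cong) auto
      also have "\<dots> = real (card {j. j < n \<and> z j = 1})" by (rule sum_indicator_eq_card)
      also have "\<dots> \<ge> real (l0norm n x)"
        unfolding l0norm_def by (simp, rule card_mono) (use that in \<open>auto simp: supported_def\<close>)
      finally show ?thesis using \<open>\<theta> \<ge> 0\<close> by (rule mult_left_mono)
    qed
    ultimately show ?thesis by (simp add: objU_eq)
  qed
  then obtain \<alpha> \<beta> where "\<forall>r<m. \<beta> r \<ge> 0" and "M - \<theta> * (\<Sum>j<n. z j) < dual z \<alpha> \<beta>"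
    using strong_duality[OF z01] by blast
  then have "ereal M \<le> (SUP \<alpha>\<beta> \<in> {(\<alpha>, \<beta>). \<forall>r<m. \<beta> r \<ge> 0}.
      ereal (Hfun n m k lam v c A b \<eta> \<theta> z (fst \<alpha>\<beta>) (snd \<alpha>\<beta>)))"
    by (intro SUP_upper2[of "(\<alpha>, \<beta>)"]) (auto simp: Hfun_eq_dual)
  then show "U \<le> (SUP \<alpha>\<beta> \<in> {(\<alpha>, \<beta>). \<forall>r<m. \<beta> r \<ge> 0}.
      ereal (Hfun n m k lam v c A b \<eta> \<theta> z (fst \<alpha>\<beta>) (snd \<alpha>\<beta>)))"
    using M(1) by simp
qed

end

theorem propositionC1:
  fixes n m k :: nat
    and Q :: "nat \<Rightarrow> nat \<Rightarrow> real"
    and lam :: "nat \<Rightarrow> real"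
    and v :: "nat \<Rightarrow> nat \<Rightarrow> real"
    and c b :: "nat \<Rightarrow> real"
    and A :: "nat \<Rightarrow> nat \<Rightarrow> real"
    and \<eta> \<theta> :: real
  assumes Q_sym: "\<forall>i<n. \<forall>j<n. Q i j = Q j i"
    and Q_psd: "\<forall>x::nat \<Rightarrow> real. (\<Sum>i<n. \<Sum>j<n. x i * Q i j * x j) \<ge> 0"
    and Q_eig: "\<forall>i<n. \<forall>j<n. Q i j = (\<Sum>l<n. lam l * v l i * v l j)"
    and lam_sorted: "\<forall>i j. i \<le> j \<longrightarrow> j < n \<longrightarrow> lam j \<le> lam i"
    and lam_nonneg: "\<forall>i<n. lam i \<ge> 0"
    and v_orthonormal: "\<forall>i<n. \<forall>i'<n. (\<Sum>j<n. v i j * v i' j) = (if i = i' then 1 else 0)"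
    and \<eta>_pos: "\<eta> > 0"
    and \<theta>_pos: "\<theta> > 0"
    and k_le: "k \<le> n"
  shows "Ustar n m k lam v c A b \<eta> \<theta> =
    (INF z \<in> {z. \<forall>j<n. z j \<in> {0, 1}}.
       SUP \<alpha>\<beta> \<in> {(\<alpha>, \<beta>). \<forall>r<m. \<beta> r \<ge> 0}.
         ereal (Hfun n m k lam v c A b \<eta> \<theta> z (fst \<alpha>\<beta>) (snd \<alpha>\<beta>)))"
proof -
  interpret sparse_qp n m k lam v c b A \<eta>
    using lam_nonneg k_le \<eta>_pos by unfold_locales auto
  show ?thesis
    using \<theta>_pos by (intro antisym INF_greatest Ustar_le_maximin minimax_le_Ustar) auto
qed

end
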